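(* Let $n\in\{3,4\}$, $\tau\in\widehat{SO_n}$ and $0\le\ell\le a_\tau$. Suppose that there exists a nontrivial $K$-equivariant polynomial $P:\mathbb R^n\to{\rm End}(V_\tau)$, homogeneous of degree $d$ and taking values in $\mathcal W^\ell_\tau$. Then $d\ge\ell\kappa$ and $d-\ell\kappa$ is even.
   Context: $K=SO_n$; a map $P:\mathbb R^n\to{\rm End}(V_\tau)$ is $K$-equivariant if $P(ky)=\tau(k)P(y)\tau(k)^{-1}$. ${\rm End}(V_\tau)$ carries the representation $\tilde\tau(k)A=\tau(k)A\tau(k)^{-1}$. Case $n=3$: $\widehat{SO_3}=\{\tau_\mu:\mu\in\mathbb N\}$, $\dim\tau_\mu=2\mu+1$; $a_\tau=2\mu$, $\kappa=1$; ${\rm End}(V_\tau)=\bigoplus_{\ell=0}^{2\mu}\mathcal W^\ell_\tau$ with $\mathcal W^\ell_\tau$ the (unique) $\tilde\tau$-invariant irreducible subspace equivalent to $\tau_\ell$. Case $n=4$: identify $\mathbb R^4=\mathbb H$, $SO_4\cong(SU_2\times SU_2)/\mathbb Z_2$ acting by $(u,v)\cdot y=uyv^{-1}$; $\widehat{SO_4}=\{\tau_{\nu,\mu}=\tau_\nu\boxtimes\tau_\mu:\nu,\mu\in\frac12\mathbb N,\nu+\mu\in\mathbb N\}$, $\tau_\nu$ the $(2\nu+1)$-dimensional irreducible representation of $SU_2$; $a_\tau=2\min(\mu,\nu)$, $\kappa=2$; ${\rm End}(V_\tau)={\rm End}(V_{\tau_\nu})\otimes{\rm End}(V_{\tau_\mu})$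 and $\mathcal W^\ell_\tau=\mathcal W^\ell_{\tau_\nu}\otimes\mathcal W^\ell_{\tau_\mu}$, where $\mathcal W^\ell_{\tau_\nu}\subset{\rm End}(V_{\tau_\nu})$ is the conjugation-invariant irreducible subspace equivalent to $\tau_\ell$. *)

theory Defs
  imports "HOL-Analysis.Analysis" "HOL-Computational_Algebra.Polynomial"
begin

text \<open>The quaternion (a,b) stands for the complex 2x2 matrix [[a, -cnj b],[b, cnj a]].
  Unit quaternions form SU2.\<close>

type_synonym quat = "complex \<times> complex"

definition qmul :: "quat \<Rightarrow> quat \<Rightarrow> quat" where
  "qmul p q = (case p of (a,b) \<Rightarrow> case q of (c,d) \<Rightarrow> (a*c - cnj b * d, b*c + cnj a * d))"

definition qcnj :: "quat \<Rightarrow> quat" where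
  "qcnj p = (case p of (a,b) \<Rightarrow> (cnj a, - b))"

definition SU2 :: "quat set" where
  "SU2 = {(a,b). (cmod a)\<^sup>2 + (cmod b)\<^sup>2 = 1}"

definition of_R4 :: "real^4 \<Rightarrow> quat" where
  "of_R4 y = (Complex (y$1) (y$2), Complex (y$3) (y$4))"

definition to_R4 :: "quat \<Rightarrow> real^4" where
  "to_R4 q = (case q of (a,b) \<Rightarrow> vector [Re a, Im a, Re b, Im b])"

definition of_R3 :: "real^3 \<Rightarrow> quat" where
  "of_R3 y = (Complex 0 (y$1), Complex (y$2) (y$3))"

definition to_R3 :: "quat \<Rightarrow> real^3" where
  "to_R3 q = (case q of (a,b) \<Rightarrow> vector [Im a, Re b, Im b])"

text \<open>SO3 = SU2/{+-1} acting on R^3 = Im H by u y u^-1;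
  SO4 = (SU2 x SU2)/Z2 acting on R^4 = H by u y v^-1.\<close>

definition rot3 :: "quat \<Rightarrow> real^3 \<Rightarrow> real^3" where
  "rot3 u y = to_R3 (qmul (qmul u (of_R3 y)) (qcnj u))"

definition rot4 :: "quat \<Rightarrow> quat \<Rightarrow> real^4 \<Rightarrow> real^4" where
  "rot4 u v y = to_R4 (qmul (qmul u (of_R4 y)) (qcnj v))"

text \<open>spin m is the (m+1)-dimensional irreducible representation of SU2 (tau_(m/2)),
  realized on binary forms f(z1,z2) = sum_k p_k z1^k z2^(m-k) of degree m by
  (g.f)(z) = f(g^T z); matrix w.r.t. the monomial basis, indices 0..m.\<close>

definition spin :: "nat \<Rightarrow> quat \<Rightarrow> nat \<Rightarrow> nat \<Rightarrow> complex" where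
  "spin m g = (case g of (a,b) \<Rightarrow> (\<lambda>j k. if j \<le> m \<and> k \<le> m
       then coeff ([:b, a:] ^ k * [:cnj a, - cnj b:] ^ (m - k)) j else 0))"

definition mmul :: "'i set \<Rightarrow> ('i \<Rightarrow> 'i \<Rightarrow> complex) \<Rightarrow> ('i \<Rightarrow> 'i \<Rightarrow> complex) \<Rightarrow> 'i \<Rightarrow> 'i \<Rightarrow> complex" where
  "mmul I A B = (\<lambda>i j. \<Sum>k\<in>I. A i k * B k j)"

definition mvmul :: "'i set \<Rightarrow> ('i \<Rightarrow> 'i \<Rightarrow> complex) \<Rightarrow> ('i \<Rightarrow> complex) \<Rightarrow> 'i \<Rightarrow> complex" where
  "mvmul I A x = (\<lambda>i. \<Sum>k\<in>I. A i k * x k)"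

text \<open>V_(m/2) = vectors supported in {0..m}; End over index set I.\<close>

definition Vsp :: "nat \<Rightarrow> (nat \<Rightarrow> complex) set" where
  "Vsp m = {x. \<forall>i. m < i \<longrightarrow> x i = 0}"

definition endsp :: "'i set \<Rightarrow> ('i \<Rightarrow> 'i \<Rightarrow> complex) set" where
  "endsp I = {M. \<forall>i j. i \<notin> I \<or> j \<notin> I \<longrightarrow> M i j = 0}"

definition conjS :: "nat \<Rightarrow> quat \<Rightarrow> (nat \<Rightarrow> nat \<Rightarrow> complex) \<Rightarrow> nat \<Rightarrow> nat \<Rightarrow> complex" where
  "conjS m g M = mmul {..m} (mmul {..m} (spin m g) M) (spin m (qcnj g))"

text \<open>W is a conjugation-invariant subspace of End(V_(m/2)) equivalent to tau_l
  (the (2l+1)-dimensional representation): there is a complex-linear bijective intertwiner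
  from V_l onto W.\<close>

definition Wl_sub :: "nat \<Rightarrow> nat \<Rightarrow> (nat \<Rightarrow> nat \<Rightarrow> complex) set \<Rightarrow> bool" where
  "Wl_sub m l W \<longleftrightarrow> W \<subseteq> endsp {..m} \<and>
     (\<exists>T. bij_betw T (Vsp (2*l)) W \<and>
        (\<forall>x\<in>Vsp (2*l). \<forall>y\<in>Vsp (2*l). T (\<lambda>i. x i + y i) = (\<lambda>p q. T x p q + T y p q)) \<and>
        (\<forall>c. \<forall>x\<in>Vsp (2*l). T (\<lambda>i. c * x i) = (\<lambda>p q. c * T x p q)) \<and>
        (\<forall>g\<in>SU2. \<forall>x\<in>Vsp (2*l). T (mvmul {..2*l} (spin (2*l) g) x) = conjS m g (T x)))"

definition tens :: "('a \<Rightarrow> 'a \<Rightarrow> complex) \<Rightarrow> ('b \<Rightarrow> 'b \<Rightarrow> complex) \<Rightarrow> ('a \<times> 'b) \<Rightarrow> ('a \<times> 'b) \<Rightarrow> complex" where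
  "tens A B = (\<lambda>(i,k) (j,l). A i j * B k l)"

definition tspan :: "('a \<Rightarrow> 'a \<Rightarrow> complex) set \<Rightarrow> ('b \<Rightarrow> 'b \<Rightarrow> complex) set \<Rightarrow> (('a \<times> 'b) \<Rightarrow> ('a \<times> 'b) \<Rightarrow> complex) set" where
  "tspan W1 W2 = {M. \<exists>(N::nat) A B. (\<forall>t<N. A t \<in> W1 \<and> B t \<in> W2) \<and>
      M = (\<lambda>p q. \<Sum>t<N. tens (A t) (B t) p q)}"

definition conjT :: "nat \<Rightarrow> nat \<Rightarrow> quat \<Rightarrow> quat \<Rightarrow> (nat\<times>nat \<Rightarrow> nat\<times>nat \<Rightarrow> complex) \<Rightarrow> nat\<times>nat \<Rightarrow> nat\<times>nat \<Rightarrow> complex" where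
  "conjT m1 m2 u v M = mmul ({..m1} \<times> {..m2})
      (mmul ({..m1} \<times> {..m2}) (tens (spin m1 u) (spin m2 v)) M)
      (tens (spin m1 (qcnj u)) (spin m2 (qcnj v)))"

definition hom_poly :: "nat \<Rightarrow> (real^'n \<Rightarrow> 'i \<Rightarrow> 'j \<Rightarrow> complex) \<Rightarrow> bool" where
  "hom_poly d P \<longleftrightarrow> (\<exists>c. \<forall>y i j. P y i j =
     (\<Sum>\<alpha>\<in>{\<alpha>::'n \<Rightarrow> nat. sum \<alpha> UNIV = d}. c \<alpha> i j * (\<Prod>k\<in>UNIV. complex_of_real (y$k) ^ \<alpha> k)))"

end

theory Submission
  imports Defs
begin

text \<open>Restrict everything to the maximal torus T = {(a, 0) : |a| = 1} of SU2. The space W has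
  a basis N_0, ..., N_2l (the image of the standard basis of V_l) on which (a, 0) acts by the
  weights a^(2k - 2l). Choose a point y whose T-orbit has coordinates a^(-e) (b0 + b1 a^s); then
  a^(e d) P(y(a)) is a polynomial of degree at most d in a^s, while equivariance writes
  a^(2l) P(y(a)) as the sum of c_k a^(2k). If the top weight coefficient c_2l is nonzero, comparing
  exponents on the unit circle gives that s divides e d + 2l and e d + 2l \<le> s d.

  For SO3 (e = 2, s = 4) y is orthogonal to the torus axis: P at the axis is torus invariant,
  hence of weight zero, and a rotation carrying the axis to y makes the top weight appear. For
  SO4 (e = 1, s = 2) the torus acts on H by left multiplication, and a generic rotation produces
  a point at which the top weight appears.\<close>

section \<open>Polynomials on the unit circle\<close>

lemma infinite_unit_circle: "infinite {a::complex. cmod a = 1}"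
proof
  assume fin: "finite {a::complex. cmod a = 1}"
  have "{a::complex. cmod a = 1} = sphere 0 1" by auto
  with fin connected_finite_iff_sing[OF connected_sphere[of "0::complex" 1]]
  obtain c where "sphere (0::complex) 1 = {c}" by auto
  moreover have "1 \<in> sphere (0::complex) 1" "-1 \<in> sphere (0::complex) 1" by auto
  ultimately show False by auto
qed

lemma poly_eq_on_unit_circle:
  fixes p q :: "complex poly"
  assumes "\<And>a. cmod a = 1 \<Longrightarrow> poly p a = poly q a"
  shows "p = q"
proof (rule ccontr)
  assume "p \<noteq> q"
  then have "finite {a. poly (p - q) a = 0}" by (intro poly_roots_finite) simp
  moreover have "{a::complex. cmod a = 1} \<subseteq> {a. poly (p - q) a = 0}" using assms by auto
  ultimately show False using infinite_unit_circle finite_subset by blast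
qed

lemma coeff_sum_monom:
  "coeff (\<Sum>i\<in>A. monom (c i) (f i)) n = (\<Sum>i\<in>A. if f i = n then c i else 0)"
  by (simp add: coeff_sum coeff_monom)

text \<open>Comparing the two sides as polynomials in a: the exponent q + 2K carries the nonzero
  coefficient w K on the right, so it must occur on the left, i.e. in p + s \<nat>.\<close>

lemma exponent_match_on_unit_circle:
  fixes Q :: "complex poly" and w :: "nat \<Rightarrow> complex"
  assumes eq: "\<And>a. cmod a = 1 \<Longrightarrow> a ^ p * poly Q (a ^ s) = a ^ q * (\<Sum>j\<le>K. w j * a ^ (2 * j))"
    and top: "w K \<noteq> 0"
  shows "p \<le> q + 2 * K \<and> s dvd (q + 2 * K - p) \<and> q + 2 * K - p \<le> s * degree Q"
proof -
  define A where "A = monom 1 p * (\<Sum>i\<le>degree Q. monom (coeff Q i) (s * i))"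
  define B where "B = monom 1 q * (\<Sum>j\<le>K. monom (w j) (2 * j))"
  have "A = B"
  proof (rule poly_eq_on_unit_circle)
    fix a :: complex assume "cmod a = 1"
    have "poly A a = a ^ p * poly Q (a ^ s)"
      by (simp add: A_def poly_sum poly_monom poly_altdef[of Q "a ^ s"] power_mult)
    also have "\<dots> = poly B a"
      using eq[OF \<open>cmod a = 1\<close>] by (simp add: B_def poly_sum poly_monom)
    finally show "poly A a = poly B a" .
  qed
  have "coeff B (q + 2 * K) = w K"
    by (simp add: B_def coeff_monom_mult coeff_sum_monom)
  then have "coeff A (q + 2 * K) \<noteq> 0" using \<open>A = B\<close> top by simp
  then have "p \<le> q + 2 * K" and "\<exists>i\<le>degree Q. s * i = q + 2 * K - p"
    by (auto simp: A_def coeff_monom_mult coeff_sum_monom split: if_splits intro: ccontr)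
  then show ?thesis by (metis dvd_triv_left mult_le_mono2)
qed

definition circle_binomial :: "nat \<Rightarrow> nat \<Rightarrow> (complex \<Rightarrow> complex) \<Rightarrow> bool" where
  "circle_binomial e s f \<longleftrightarrow> (\<exists>b0 b1. \<forall>a. cmod a = 1 \<longrightarrow> a ^ e * f a = b0 + b1 * a ^ s)"

lemma circle_binomial_Re:
  assumes "circle_binomial e s f" "circle_binomial e s (\<lambda>a. cnj (f a))"
  shows "circle_binomial e s (\<lambda>a. complex_of_real (Re (f a)))"
proof -
  obtain b0 b1 c0 c1 where "\<And>a. cmod a = 1 \<Longrightarrow> a ^ e * f a = b0 + b1 * a ^ s"
    "\<And>a. cmod a = 1 \<Longrightarrow> a ^ e * cnj (f a) = c0 + c1 * a ^ s"
    using assms unfolding circle_binomial_def by metis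
  moreover have "complex_of_real (Re w) = (w + cnj w) / 2" for w
    using complex_add_cnj[of w] by (simp add: field_simps)
  ultimately have "a ^ e * complex_of_real (Re (f a)) = (b0 + c0) / 2 + (b1 + c1) / 2 * a ^ s"
    if "cmod a = 1" for a
    using that by (simp add: distrib_left add_divide_distrib algebra_simps)
  then show ?thesis unfolding circle_binomial_def by blast
qed

lemma circle_binomial_scale:
  assumes "circle_binomial e s f"
  shows "circle_binomial e s (\<lambda>a. c * f a)"
proof -
  obtain b0 b1 where "\<And>a. cmod a = 1 \<Longrightarrow> a ^ e * f a = b0 + b1 * a ^ s"
    using assms unfolding circle_binomial_def by metis
  then have "a ^ e * (c * f a) = c * b0 + c * b1 * a ^ s" if "cmod a = 1" for a
    using that by (metis distrib_left mult.assoc mult.left_commute)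
  then show ?thesis unfolding circle_binomial_def by blast
qed

lemma circle_binomial_Im:
  assumes "circle_binomial e s f" "circle_binomial e s (\<lambda>a. cnj (f a))"
  shows "circle_binomial e s (\<lambda>a. complex_of_real (Im (f a)))"
proof -
  have "circle_binomial e s (\<lambda>a. cnj (- \<i> * f a))"
    using circle_binomial_scale[OF assms(2), of \<i>] by simp
  from circle_binomial_Re[OF circle_binomial_scale[OF assms(1)] this] show ?thesis by simp
qed

lemma unit_mult_cnj: "cmod a = 1 \<Longrightarrow> a * cnj a = 1"
  using complex_norm_square[of a] by simp

lemma torus_weight_sum:
  assumes "cmod a = 1"
  shows "a ^ n * (\<Sum>k\<le>n. a ^ k * cnj a ^ (n - k) * c k) = (\<Sum>k\<le>n. c k * a ^ (2 * k))"
proof -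
  have unit: "a * cnj a = 1" using unit_mult_cnj[OF assms] .
  have "a ^ n * (a ^ k * cnj a ^ (n - k)) = a ^ (2 * k)" if "k \<le> n" for k
  proof -
    have "a ^ n * (a ^ k * cnj a ^ (n - k)) = a ^ k * a ^ k * (a * cnj a) ^ (n - k)"
      using that by (simp add: power_mult_distrib algebra_simps flip: power_add)
    then show ?thesis by (simp add: unit mult_2 power_add)
  qed
  then show ?thesis by (simp add: sum_distrib_left algebra_simps)
qed

lemma hom_poly_scale:
  fixes P :: "real^'n \<Rightarrow> 'i \<Rightarrow> 'j \<Rightarrow> complex"
  assumes "hom_poly d P"
  shows "P (r *\<^sub>R y) = (\<lambda>i j. complex_of_real r ^ d * P y i j)"
proof -
  define S where "S = {\<alpha>::'n \<Rightarrow> nat. sum \<alpha> UNIV = d}"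
  obtain c where c: "\<And>y i j. P y i j =
      (\<Sum>\<alpha>\<in>S. c \<alpha> i j * (\<Prod>k\<in>UNIV. complex_of_real (y$k) ^ \<alpha> k))"
    using assms unfolding hom_poly_def S_def by blast
  have monomial: "(\<Prod>k\<in>UNIV. complex_of_real ((r *\<^sub>R y)$k) ^ \<alpha> k)
      = complex_of_real r ^ d * (\<Prod>k\<in>UNIV. complex_of_real (y$k) ^ \<alpha> k)" if "\<alpha> \<in> S" for \<alpha>
    using that by (simp add: S_def power_mult_distrib prod.distrib power_sum[symmetric])
  show ?thesis
  proof (intro ext)
    fix i j
    have "P (r *\<^sub>R y) i j = (\<Sum>\<alpha>\<in>S. c \<alpha> i j *
        (complex_of_real r ^ d * (\<Prod>k\<in>UNIV. complex_of_real (y$k) ^ \<alpha> k)))"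
      unfolding c[of "r *\<^sub>R y"] by (intro sum.cong refl) (simp only: monomial)
    then show "P (r *\<^sub>R y) i j = complex_of_real r ^ d * P y i j"
      by (simp add: c[of y] sum_distrib_left mult.left_commute)
  qed
qed

lemma hom_poly_along_curve:
  fixes P :: "real^'n \<Rightarrow> 'i \<Rightarrow> 'j \<Rightarrow> complex" and y :: "complex \<Rightarrow> real^'n"
  assumes "hom_poly d P"
    and "\<And>k. circle_binomial e s (\<lambda>a. complex_of_real (y a $ k))"
  obtains Q where "degree Q \<le> d"
    "\<And>a. cmod a = 1 \<Longrightarrow> a ^ (e * d) * P (y a) i j = poly Q (a ^ s)"
proof -
  define S where "S = {\<alpha>::'n \<Rightarrow> nat. sum \<alpha> UNIV = d}"
  obtain c where c: "\<And>y i j. P y i j =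
      (\<Sum>\<alpha>\<in>S. c \<alpha> i j * (\<Prod>k\<in>UNIV. complex_of_real (y$k) ^ \<alpha> k))"
    using assms unfolding hom_poly_def S_def by blast
  obtain b0 b1 where curve:
    "\<And>k a. cmod a = 1 \<Longrightarrow> a ^ e * complex_of_real (y a $ k) = b0 k + b1 k * a ^ s"
    using assms(2) unfolding circle_binomial_def by metis
  define L where "L k = [:b0 k, b1 k:]" for k
  define Q where "Q = (\<Sum>\<alpha>\<in>S. smult (c \<alpha> i j) (\<Prod>k\<in>UNIV. L k ^ \<alpha> k))"
  have "degree (smult (c \<alpha> i j) (\<Prod>k\<in>UNIV. L k ^ \<alpha> k)) \<le> d" if "\<alpha> \<in> S" for \<alpha>
  proof -
    have "degree (\<Prod>k\<in>UNIV. L k ^ \<alpha> k) \<le> (\<Sum>k\<in>UNIV. degree (L k ^ \<alpha> k))"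
      using degree_prod_sum_le[of UNIV "\<lambda>k. L k ^ \<alpha> k"] by simp
    also have "\<dots> \<le> (\<Sum>k\<in>UNIV. \<alpha> k)"
      by (intro sum_mono order_trans[OF degree_power_le]) (simp add: L_def)
    finally show ?thesis using that by (simp add: S_def)
  qed
  then have "degree Q \<le> d"
    unfolding Q_def by (cases "finite S") (auto intro: degree_sum_le)
  moreover have "a ^ (e * d) * P (y a) i j = poly Q (a ^ s)" if "cmod a = 1" for a
  proof -
    have "a ^ (e * d) * (\<Prod>k\<in>UNIV. complex_of_real (y a $ k) ^ \<alpha> k)
        = (\<Prod>k\<in>UNIV. (b0 k + b1 k * a ^ s) ^ \<alpha> k)" if "\<alpha> \<in> S" for \<alpha>
    proof -
      have "d = sum \<alpha> UNIV" using that by (simp add: S_def)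
      then have "a ^ (e * d) = (\<Prod>k\<in>UNIV. (a ^ e) ^ \<alpha> k)"
        by (simp add: power_sum power_mult)
      then show ?thesis
        using curve[OF \<open>cmod a = 1\<close>]
        by (simp add: prod.distrib[symmetric] power_mult_distrib[symmetric])
    qed
    then show ?thesis
      by (simp add: c Q_def L_def poly_sum poly_prod sum_distrib_left mult.left_commute
          mult.commute cong: sum.cong)
  qed
  ultimately show ?thesis using that by blast
qed

lemma hom_poly_weight_bound:
  fixes P :: "real^'n \<Rightarrow> 'i \<Rightarrow> 'j \<Rightarrow> complex" and y :: "complex \<Rightarrow> real^'n"
  assumes "hom_poly d P"
    and curve: "\<And>k. circle_binomial e s (\<lambda>a. complex_of_real (y a $ k))"
    and weights: "\<And>a. cmod a = 1 \<Longrightarrow> P (y a) i j = (\<Sum>k\<le>n. a ^ k * cnj a ^ (n - k) * w k)"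
    and top: "w n \<noteq> 0"
  shows "s dvd (e * d + n) \<and> e * d + n \<le> s * d"
proof -
  obtain Q where deg: "degree Q \<le> d"
    and Q: "\<And>a. cmod a = 1 \<Longrightarrow> a ^ (e * d) * P (y a) i j = poly Q (a ^ s)"
    using hom_poly_along_curve[OF \<open>hom_poly d P\<close> curve] by blast
  have "a ^ n * poly Q (a ^ s) = a ^ (e * d) * (\<Sum>k\<le>n. w k * a ^ (2 * k))" if "cmod a = 1" for a
    using Q[OF that, symmetric] torus_weight_sum[OF that, of n w] weights[OF that]
    by (simp add: algebra_simps)
  from exponent_match_on_unit_circle[OF this top] have
    "s dvd (e * d + n) \<and> e * d + n \<le> s * degree Q" by (simp add: mult_2)
  with deg show ?thesis by (meson le_trans mult_le_mono2)
qed

lemma coeff_mult_at_degree_bounds: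
  fixes p q :: "'a::comm_semiring_1 poly"
  assumes "degree p \<le> n" "degree q \<le> m"
  shows "coeff (p * q) (n + m) = coeff p n * coeff q m"
proof -
  have "coeff p i * coeff q (n + m - i) = 0" if "i \<noteq> n" for i
    using that assms by (cases "i < n") (auto simp: coeff_eq_0)
  then have "coeff (p * q) (n + m) = (\<Sum>i\<in>{n}. coeff p i * coeff q (n + m - i))"
    unfolding coeff_mult by (intro sum.mono_neutral_right) auto
  then show ?thesis by simp
qed

lemma spin_last_row:
  assumes "k \<le> m"
  shows "spin m (a, b) m k = a ^ k * (- cnj b) ^ (m - k)"
proof -
  have "coeff ([:b, a:] ^ k * [:cnj a, - cnj b:] ^ (m - k)) (k + (m - k))
      = coeff ([:b, a:] ^ k) k * coeff ([:cnj a, - cnj b:] ^ (m - k)) (m - k)"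
    by (intro coeff_mult_at_degree_bounds order_trans[OF degree_power_le]) auto
  then show ?thesis using assms by (simp add: spin_def coeff_linear_poly_power)
qed

lemma spin_torus:
  "spin m (a, 0) j k = (if j = k \<and> k \<le> m then a ^ k * cnj a ^ (m - k) else 0)"
proof -
  have "[:0, a:] ^ k * [:cnj a, - cnj 0:] ^ (m - k) = monom (a ^ k * cnj a ^ (m - k)) k"
    by (simp add: monom_altdef[where n = 1, simplified, symmetric] monom_power
        poly_const_pow smult_monom mult.commute)
  then show ?thesis by (simp add: spin_def coeff_monom)
qed

lemma spin_torus_sum:
  "j \<le> n \<Longrightarrow> (\<Sum>k\<le>n. spin n (a, 0) j k * z k) = a ^ j * cnj a ^ (n - j) * z j"
  by (simp add: spin_torus if_distrib[of "\<lambda>t. t * _"] cong: if_cong)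

lemma mvmul_spin_torus:
  "mvmul {..n} (spin n (a, 0)) x = (\<lambda>k. if k \<le> n then a ^ k * cnj a ^ (n - k) * x k else 0)"
  by (auto simp: mvmul_def spin_torus if_distrib[of "\<lambda>t. t * _"] sum.delta cong: if_cong)

lemma torus_invariant_weight_vanishes:
  assumes fixed: "\<And>a. cmod a = 1 \<Longrightarrow> a ^ k * cnj a ^ (n - k) * z = z"
    and "k \<le> n" "2 * k \<noteq> n"
  shows "z = 0"
proof -
  define t where "t = pi / (2 * real k - real n)"
  have "cis t ^ k * cnj (cis t) ^ (n - k) = cis (real k * t) * cis (real (n - k) * - t)"
    by (simp only: Complex.DeMoivre cis_cnj)
  also have "\<dots> = cis ((2 * real k - real n) * t)"
    using \<open>k \<le> n\<close> by (simp add: cis_mult of_nat_diff algebra_simps)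
  also have "\<dots> = -1" using \<open>2 * k \<noteq> n\<close> by (simp add: t_def)
  finally show ?thesis using fixed[of "cis t"] by simp
qed

text \<open>The last row of spin n at (c, -c t), c = (1 + t^2)^(-1/2), is c^n times the monomials
  t^(n-k), so a nonzero vector is detected by some real t that is not a root.\<close>

lemma spin_last_row_nonvanishing:
  assumes "k0 \<le> n" "v k0 \<noteq> 0"
  obtains g where "g \<in> SU2" "(\<Sum>k\<le>n. spin n g n k * v k) \<noteq> 0"
proof -
  define Q where "Q = (\<Sum>k\<le>n. monom (v k) (n - k))"
  have "coeff Q (n - k0) = (\<Sum>k\<le>n. if k = k0 then v k else 0)"
    unfolding Q_def coeff_sum_monom using assms(1)
    by (intro sum.cong refl) (metis atMost_iff diff_diff_cancel)
  then have "Q \<noteq> 0" using assms by auto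
  then have "finite (of_real -` {z. poly Q z = 0} :: real set)"
    by (intro finite_vimageI poly_roots_finite) (simp_all add: inj_of_real)
  then obtain t :: real where t: "poly Q (complex_of_real t) \<noteq> 0"
    using ex_new_if_finite[OF infinite_UNIV_char_0] by auto
  define c where "c = 1 / sqrt (1 + t\<^sup>2)"
  have "c > 0" by (simp add: c_def add_pos_nonneg)
  have "1 + t\<^sup>2 > 0" by (simp add: add_pos_nonneg)
  then have "c\<^sup>2 + (c * t)\<^sup>2 = 1"
    by (simp add: c_def power_divide power_mult_distrib flip: add_divide_distrib)
  then have g: "(complex_of_real c, - complex_of_real (c * t)) \<in> SU2"
    by (simp add: SU2_def del: of_real_mult)
  have "spin n (complex_of_real c, - complex_of_real (c * t)) n k =
      complex_of_real (c ^ n * t ^ (n - k))" if "k \<le> n" for k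
    using that by (simp add: spin_last_row power_mult_distrib flip: power_add)
  then have "(\<Sum>k\<le>n. spin n (complex_of_real c, - complex_of_real (c * t)) n k * v k)
      = complex_of_real (c ^ n) * poly Q (complex_of_real t)"
    by (simp add: Q_def poly_sum poly_monom sum_distrib_left algebra_simps)
  then show ?thesis using that g t \<open>c > 0\<close> by fastforce
qed

definition lincomb ::
    "nat \<Rightarrow> (nat \<Rightarrow> 'a \<Rightarrow> 'b \<Rightarrow> complex) \<Rightarrow> (nat \<Rightarrow> complex) \<Rightarrow> 'a \<Rightarrow> 'b \<Rightarrow> complex" where
  "lincomb n N x = (\<lambda>p q. \<Sum>k\<le>n. x k * N k p q)"

definition lincomb_independent :: "nat \<Rightarrow> (nat \<Rightarrow> 'a \<Rightarrow> 'b \<Rightarrow> complex) \<Rightarrow> bool" where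
  "lincomb_independent n N \<longleftrightarrow> (\<forall>x. lincomb n N x = (\<lambda>p q. 0) \<longrightarrow> (\<forall>k\<le>n. x k = 0))"

lemma lincomb_cong: "(\<And>k. k \<le> n \<Longrightarrow> x k = x' k) \<Longrightarrow> lincomb n N x = lincomb n N x'"
  by (simp add: lincomb_def)

lemma lincomb_unit: "k \<le> n \<Longrightarrow> lincomb n N (\<lambda>j. if j = k then 1 else 0) = N k"
  by (simp add: lincomb_def if_distrib[of "\<lambda>t. t * _"] cong: if_cong)

lemma lincomb_eq_iff:
  assumes "lincomb_independent n N"
  shows "lincomb n N x = lincomb n N x' \<longleftrightarrow> (\<forall>k\<le>n. x k = x' k)"
proof
  assume "lincomb n N x = lincomb n N x'"
  then have "lincomb n N (\<lambda>k. x k - x' k) = (\<lambda>p q. 0)"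
    by (simp add: lincomb_def fun_eq_iff left_diff_distrib sum_subtractf)
  then show "\<forall>k\<le>n. x k = x' k" using assms unfolding lincomb_independent_def by fastforce
qed (auto intro: lincomb_cong)

lemma lincomb_torus_fixed_weight_zero:
  assumes "lincomb_independent n N"
    and fixed: "\<And>a. cmod a = 1 \<Longrightarrow> lincomb n N (\<lambda>k. a ^ k * cnj a ^ (n - k) * x k) = lincomb n N x"
    and "k \<le> n" "2 * k \<noteq> n"
  shows "x k = 0"
proof (rule torus_invariant_weight_vanishes[OF _ \<open>k \<le> n\<close> \<open>2 * k \<noteq> n\<close>])
  fix a :: complex assume "cmod a = 1"
  from fixed[OF this] show "a ^ k * cnj a ^ (n - k) * x k = x k"
    using \<open>k \<le> n\<close> by (simp add: lincomb_eq_iff[OF assms(1)])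
qed

lemma lincomb_independent_nonzero:
  assumes "lincomb_independent n N" and "k \<le> n"
  obtains p q where "N k p q \<noteq> 0"
proof -
  have "N k \<noteq> (\<lambda>p q. 0)"
  proof
    assume "N k = (\<lambda>p q. 0)"
    then have "lincomb n N (\<lambda>j. if j = k then 1 else 0) = (\<lambda>p q. 0)"
      using lincomb_unit[of k n N] \<open>k \<le> n\<close> by simp
    then have "(if k = k then 1 else 0 :: complex) = 0"
      using assms unfolding lincomb_independent_def by blast
    then show False by simp
  qed
  then show ?thesis using that by (meson ext)
qed

lemma linear_on_Vsp_expansion:
  fixes T :: "(nat \<Rightarrow> complex) \<Rightarrow> 'a \<Rightarrow> 'b \<Rightarrow> complex"
  assumes add: "\<And>x y. x \<in> Vsp n \<Longrightarrow> y \<in> Vsp n \<Longrightarrow> T (\<lambda>i. x i + y i) = (\<lambda>p q. T x p q + T y p q)"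
    and smult: "\<And>c x. x \<in> Vsp n \<Longrightarrow> T (\<lambda>i. c * x i) = (\<lambda>p q. c * T x p q)"
    and "x \<in> Vsp n"
  shows "T x = lincomb n (\<lambda>k. T (\<lambda>i. if i = k then 1 else 0)) x"
proof -
  define e :: "nat \<Rightarrow> nat \<Rightarrow> complex" where "e k = (\<lambda>i. if i = k then 1 else 0)" for k
  have e: "(\<lambda>i. x k * e k i) \<in> Vsp n" if "k \<le> n" for k
    using that by (simp add: Vsp_def e_def)
  have "F \<subseteq> {..n} \<Longrightarrow>
      T (\<lambda>i. \<Sum>k\<in>F. x k * e k i) = (\<lambda>p q. \<Sum>k\<in>F. x k * T (e k) p q)"
    if "finite F" for F
    using that
  proof (induction F rule: finite_induct)
    case empty
    have "T (\<lambda>i. 0 * 0) = (\<lambda>p q. 0 * T (\<lambda>i. 0) p q)" by (rule smult) (simp add: Vsp_def)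
    then show ?case by simp
  next
    case (insert k F)
    have sum_Vsp: "(\<lambda>i. \<Sum>k\<in>F. x k * e k i) \<in> Vsp n"
      using insert.prems by (auto simp: Vsp_def e_def intro!: sum.neutral)
    have "T (\<lambda>i. \<Sum>j\<in>insert k F. x j * e j i) = T (\<lambda>i. x k * e k i + (\<Sum>j\<in>F. x j * e j i))"
      using insert.hyps by simp
    also have "\<dots> = (\<lambda>p q. x k * T (e k) p q + T (\<lambda>i. \<Sum>j\<in>F. x j * e j i) p q)"
      using add[OF e sum_Vsp] smult[of "e k"] insert.prems by (simp add: Vsp_def e_def)
    also have "\<dots> = (\<lambda>p q. \<Sum>j\<in>insert k F. x j * T (e j) p q)"
      using insert by simp
    finally show ?case .
  qed
  from this[of "{..n}"] have "T (\<lambda>i. \<Sum>k\<le>n. x k * e k i) = lincomb n (\<lambda>k. T (e k)) x"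
    by (simp add: lincomb_def)
  moreover have "x = (\<lambda>i. \<Sum>k\<le>n. x k * e k i)"
  proof
    fix i
    have "(\<Sum>k\<le>n. x k * e k i) = (if i \<le> n then x i else 0)"
      by (simp add: e_def if_distrib[of "times _"] sum.delta' cong: if_cong)
    then show "x i = (\<Sum>k\<le>n. x k * e k i)" using \<open>x \<in> Vsp n\<close> by (simp add: Vsp_def)
  qed
  ultimately show ?thesis by (simp add: e_def)
qed

lemma mvmul_Vsp: "mvmul {..m} (spin m g) x \<in> Vsp m"
  by (auto simp: Vsp_def mvmul_def spin_def split: prod.splits)

text \<open>N k is the image of the k-th standard basis vector under the intertwiner V_l \<rightarrow> W.\<close>

lemma Wl_sub_weight_basis:
  assumes "Wl_sub m l W"
  obtains N where "\<And>M. M \<in> W \<Longrightarrow> \<exists>x. M = lincomb (2 * l) N x"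
    "lincomb_independent (2 * l) N"
    "\<And>g x. g \<in> SU2 \<Longrightarrow>
       conjS m g (lincomb (2 * l) N x) = lincomb (2 * l) N (mvmul {..2 * l} (spin (2 * l) g) x)"
proof -
  define n where "n = 2 * l"
  obtain T where bij: "bij_betw T (Vsp n) W"
    and add: "\<forall>x\<in>Vsp n. \<forall>y\<in>Vsp n. T (\<lambda>i. x i + y i) = (\<lambda>p q. T x p q + T y p q)"
    and smult: "\<forall>c. \<forall>x\<in>Vsp n. T (\<lambda>i. c * x i) = (\<lambda>p q. c * T x p q)"
    and equiv: "\<forall>g\<in>SU2. \<forall>x\<in>Vsp n. T (mvmul {..n} (spin n g) x) = conjS m g (T x)"
    using assms unfolding Wl_sub_def n_def by blast
  define N where "N k = T (\<lambda>i. if i = k then 1 else 0)" for k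
  define trunc where "trunc x = (\<lambda>i. if i \<le> n then x i else 0)" for x :: "nat \<Rightarrow> complex"
  have trunc_Vsp: "trunc x \<in> Vsp n" for x by (simp add: trunc_def Vsp_def)
  have T_trunc: "T (trunc x) = lincomb n N x" for x
  proof -
    have "T (trunc x) = lincomb n N (trunc x)"
      unfolding N_def using add smult trunc_Vsp by (intro linear_on_Vsp_expansion) blast+
    also have "\<dots> = lincomb n N x" by (rule lincomb_cong) (simp add: trunc_def)
    finally show ?thesis .
  qed
  have "\<exists>x. M = lincomb n N x" if "M \<in> W" for M
  proof -
    obtain x where "x \<in> Vsp n" "M = T x" using bij \<open>M \<in> W\<close> by (auto simp: bij_betw_def)
    moreover have "trunc x = x" using \<open>x \<in> Vsp n\<close> by (auto simp: trunc_def Vsp_def)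
    ultimately show ?thesis using T_trunc by metis
  qed
  moreover have "lincomb_independent n N"
    unfolding lincomb_independent_def
  proof (intro allI impI)
    fix x k assume zero: "lincomb n N x = (\<lambda>p q. 0)" and "k \<le> n"
    have "T (trunc x) = T (trunc (\<lambda>i. 0))" using zero T_trunc by (simp add: lincomb_def)
    then have "trunc x = trunc (\<lambda>i. 0)"
      using bij_betw_imp_inj_on[OF bij] trunc_Vsp by (blast dest: inj_onD)
    then show "x k = 0" using \<open>k \<le> n\<close> unfolding trunc_def by (metis (mono_tags))
  qed
  moreover have "conjS m g (lincomb n N x) = lincomb n N (mvmul {..n} (spin n g) x)"
    if "g \<in> SU2" for g x
  proof -
    have "mvmul {..n} (spin n g) (trunc x) = trunc (mvmul {..n} (spin n g) x)"
      using mvmul_Vsp[of n g x] by (auto simp: mvmul_def trunc_def Vsp_def)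
    then show ?thesis using equiv[rule_format, OF that trunc_Vsp] T_trunc by metis
  qed
  ultimately show ?thesis using that unfolding n_def by blast
qed

lemma lincomb_mvmul_spin_torus:
  "lincomb n N (mvmul {..n} (spin n (a, 0)) x) = lincomb n N (\<lambda>k. a ^ k * cnj a ^ (n - k) * x k)"
  by (rule lincomb_cong) (simp add: mvmul_spin_torus)

section \<open>The case SO3\<close>

lemma SU2_torus: "cmod a = 1 \<Longrightarrow> (a, 0) \<in> SU2"
  by (simp add: SU2_def)

lemma SU2_one: "(1, 0) \<in> SU2"
  by (simp add: SU2_def)

lemma SU2_real_diagonal: "(complex_of_real (1 / sqrt 2), complex_of_real (1 / sqrt 2)) \<in> SU2"
  by (simp add: SU2_def norm_divide power_divide)

lemma rot3_first_axis:
  "rot3 (a, b) (vector [1, 0, 0]) =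
     vector [(cmod a)\<^sup>2 - (cmod b)\<^sup>2, Re (2 * \<i> * cnj a * b), Im (2 * \<i> * cnj a * b)]"
  unfolding cmod_power2
  by (simp add: rot3_def qmul_def qcnj_def of_R3_def to_R3_def vec_eq_iff forall_3
      power2_eq_square algebra_simps)

lemma rot3_sphere_transitive:
  fixes u :: "real^3"
  assumes "norm u = 1"
  obtains g where "g \<in> SU2" "rot3 g (vector [1, 0, 0]) = u"
proof -
  have unit: "(u$1)\<^sup>2 + (u$2)\<^sup>2 + (u$3)\<^sup>2 = 1"
    using assms by (simp add: norm_vec_def L2_set_def sum_3)
  show ?thesis
  proof (cases "u$1 = -1")
    case True
    then have "u$2 = 0" "u$3 = 0" using unit by (simp_all add: sum_power2_eq_zero_iff)
    then have "u = vector [-1, 0, 0]" using True by (simp add: vec_eq_iff forall_3 vector_3)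
    then have "rot3 (0, 1) (vector [1, 0, 0]) = u" by (simp add: rot3_first_axis)
    moreover have "(0, 1) \<in> SU2" by (simp add: SU2_def)
    ultimately show ?thesis using that by blast
  next
    case False
    have "(u$1)\<^sup>2 \<le> 1" using unit by (smt (verit) zero_le_power2)
    then have pos: "1 + u$1 > 0" using False by (simp add: abs_square_le_1 abs_le_iff)
    define A where "A = sqrt ((1 + u$1) / 2)"
    define b where "b = Complex (u$2) (u$3) / (2 * \<i> * complex_of_real A)"
    have A: "A > 0" "A\<^sup>2 = (1 + u$1) / 2" using pos by (simp_all add: A_def)
    have ab: "2 * \<i> * cnj (complex_of_real A) * b = Complex (u$2) (u$3)"
      using A by (simp add: b_def)
    have "(cmod b)\<^sup>2 = ((u$2)\<^sup>2 + (u$3)\<^sup>2) / (4 * A\<^sup>2)"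
      using A by (simp add: b_def norm_divide norm_mult power_divide complex_norm power_mult_distrib)
    also have "\<dots> = ((1 - u$1) * (1 + u$1)) / (2 * (1 + u$1))"
    proof -
      have "(u$2)\<^sup>2 + (u$3)\<^sup>2 = (1 - u$1) * (1 + u$1)"
        using unit by (simp add: algebra_simps power2_eq_square)
      moreover have "4 * A\<^sup>2 = 2 * (1 + u$1)" using A(2) by simp
      ultimately show ?thesis by simp
    qed
    also have "\<dots> = (1 - u$1) / 2" using pos by (simp add: field_simps)
    finally have b: "(cmod b)\<^sup>2 = (1 - u$1) / 2" .
    have "(complex_of_real A, b) \<in> SU2" using A b by (simp add: SU2_def)
    moreover have "rot3 (complex_of_real A, b) (vector [1, 0, 0]) = u"
      unfolding rot3_first_axis ab using A b by (simp add: vec_eq_iff forall_3 vector_3)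
    ultimately show ?thesis using that by blast
  qed
qed

lemma rot3_torus_fixes_first_axis:
  "cmod a = 1 \<Longrightarrow> rot3 (a, 0) (vector [1, 0, 0]) = vector [1, 0, 0]"
  by (simp add: rot3_first_axis)

lemma rot3_first_to_third_axis:
  "rot3 (complex_of_real (1 / sqrt 2), complex_of_real (1 / sqrt 2)) (vector [1, 0, 0]) =
     vector [0, 0, 1]"
  by (simp add: rot3_first_axis power_divide flip: of_real_mult)

lemma circle_binomial_rot3_torus_third_axis:
  "circle_binomial 2 4 (\<lambda>a. complex_of_real (rot3 (a, 0) (vector [0, 0, 1]) $ k))"
proof -
  have rot: "rot3 (a, 0) (vector [0, 0, 1]) = vector [0, Re (\<i> * cnj a ^ 2), Im (\<i> * cnj a ^ 2)]"
    for a :: complex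
    by (simp add: rot3_def qmul_def qcnj_def of_R3_def to_R3_def vector_3 vec_eq_iff forall_3
        Complex_eq power2_eq_square algebra_simps)
  have "circle_binomial 2 4 (\<lambda>a. \<i> * cnj a ^ 2)"
    unfolding circle_binomial_def
  proof (intro exI allI impI)
    fix a :: complex assume "cmod a = 1"
    then have "a ^ 2 * cnj a ^ 2 = 1" by (simp add: unit_mult_cnj flip: power_mult_distrib)
    then show "a ^ 2 * (\<i> * cnj a ^ 2) = \<i> + 0 * a ^ 4" by simp
  qed
  moreover have "circle_binomial 2 4 (\<lambda>a. cnj (\<i> * cnj a ^ 2))"
    unfolding circle_binomial_def
    by (rule exI[of _ 0], rule exI[of _ "- \<i>"]) (simp add: power_add[symmetric])
  ultimately have "circle_binomial 2 4 (\<lambda>a. complex_of_real (Re (\<i> * cnj a ^ 2)))"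
    "circle_binomial 2 4 (\<lambda>a. complex_of_real (Im (\<i> * cnj a ^ 2)))"
    by (simp_all only: circle_binomial_Re circle_binomial_Im)
  moreover have "circle_binomial 2 4 (\<lambda>a. 0)"
    unfolding circle_binomial_def by (intro exI[of _ 0]) simp
  ultimately show ?thesis using exhaust_3[of k] by (auto simp: rot vector_3)
qed

lemma conjS_zero: "conjS m g (\<lambda>i j. 0) = (\<lambda>i j. 0)"
  unfolding conjS_def mmul_def by simp

lemma hom_poly_nonzero_at_first_axis:
  fixes P :: "real^3 \<Rightarrow> 'i \<Rightarrow> 'j \<Rightarrow> complex"
  assumes hom: "hom_poly d P" and nz: "P y \<noteq> (\<lambda>i j. 0)"
    and equiv: "\<And>u y. u \<in> SU2 \<Longrightarrow> P (rot3 u y) = C u (P y)"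
    and linear: "\<And>u. C u (\<lambda>i j. 0) = (\<lambda>i j. 0)"
  shows "P (vector [1, 0, 0]) \<noteq> (\<lambda>i j. 0)"
proof
  define e :: "real^3" where "e = vector [1, 0, 0]"
  assume Pe: "P e = (\<lambda>i j. 0)"
  define u where "u = (if y = 0 then e else (1 / norm y) *\<^sub>R y)"
  have "norm e = 1" by (simp add: e_def norm_vec_def L2_set_def sum_3 vector_3)
  then have "norm u = 1" by (simp add: u_def)
  then obtain g where "g \<in> SU2" "rot3 g e = u" using rot3_sphere_transitive e_def by metis
  then have "P u = (\<lambda>i j. 0)" using equiv[of g e] Pe linear by simp
  moreover have "y = norm y *\<^sub>R u" by (simp add: u_def)
  ultimately have "P y = (\<lambda>i j. 0)" using hom_poly_scale[OF hom, of "norm y" u] by simp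
  with nz show False ..
qed

lemma SO3_equivariant_degree:
  fixes P :: "real^3 \<Rightarrow> nat \<Rightarrow> nat \<Rightarrow> complex"
  assumes W: "Wl_sub m l W" and hom: "hom_poly d P" and nz: "P y0 \<noteq> (\<lambda>i j. 0)"
    and inW: "\<And>y. P y \<in> W" and equiv: "\<And>u y. u \<in> SU2 \<Longrightarrow> P (rot3 u y) = conjS m u (P y)"
  shows "l \<le> d \<and> even (d - l)"
proof -
  define n where "n = 2 * l"
  obtain N where span: "\<And>M. M \<in> W \<Longrightarrow> \<exists>x. M = lincomb n N x"
    and indep: "lincomb_independent n N"
    and act: "\<And>g x. g \<in> SU2 \<Longrightarrow> conjS m g (lincomb n N x) = lincomb n N (mvmul {..n} (spin n g) x)"
    using Wl_sub_weight_basis[OF W] unfolding n_def by blast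
  have torus: "P (rot3 (a, 0) y) = lincomb n N (\<lambda>k. a ^ k * cnj a ^ (n - k) * x k)"
    if "cmod a = 1" "P y = lincomb n N x" for a y x
  proof -
    have "P (rot3 (a, 0) y) = lincomb n N (mvmul {..n} (spin n (a, 0)) x)"
      using equiv[OF SU2_torus] act[OF SU2_torus] that by simp
    then show ?thesis by (simp only: lincomb_mvmul_spin_torus)
  qed
  define e :: "real^3" where "e = vector [1, 0, 0]"
  obtain x where x: "P e = lincomb n N x" using span inW by blast
  have x_weight: "x k = 0" if "k \<le> n" "k \<noteq> l" for k
  proof (rule lincomb_torus_fixed_weight_zero[OF indep])
    fix a :: complex assume "cmod a = 1"
    then show "lincomb n N (\<lambda>k. a ^ k * cnj a ^ (n - k) * x k) = lincomb n N x"
      using torus[OF _ x] rot3_torus_fixes_first_axis x by (simp add: e_def)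
  qed (use that in \<open>auto simp: n_def\<close>)
  have "P e \<noteq> (\<lambda>i j. 0)"
    unfolding e_def by (rule hom_poly_nonzero_at_first_axis[OF hom nz equiv conjS_zero])
  have "x l \<noteq> 0"
  proof
    assume "x l = 0"
    then have "lincomb n N x = lincomb n N (\<lambda>k. 0)" by (intro lincomb_cong) (metis x_weight)
    then show False using x \<open>P e \<noteq> (\<lambda>i j. 0)\<close> by (simp add: lincomb_def)
  qed
  define g where "g = (complex_of_real (1 / sqrt 2), complex_of_real (1 / sqrt 2))"
  define x' where "x' = mvmul {..n} (spin n g) x"
  have Py1: "P (vector [0, 0, 1]) = lincomb n N x'"
    using equiv[of g e] act[of g x] x SU2_real_diagonal rot3_first_to_third_axis
    by (simp add: g_def x'_def e_def)
  have "x' n = spin n g n l * x l"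
    unfolding x'_def mvmul_def using x_weight
    by (subst sum.remove[of _ l]) (auto simp: n_def intro: sum.neutral)
  obtain p q where "N n p q \<noteq> 0" using lincomb_independent_nonzero[OF indep order_refl] .
  with \<open>x' n = spin n g n l * x l\<close> \<open>x l \<noteq> 0\<close> have top: "x' n * N n p q \<noteq> 0"
    by (simp add: g_def spin_last_row n_def)
  have "P (rot3 (a, 0) (vector [0, 0, 1])) p q
      = (\<Sum>k\<le>n. a ^ k * cnj a ^ (n - k) * (x' k * N k p q))" if "cmod a = 1" for a
    using torus[OF that Py1] by (simp add: lincomb_def mult.assoc)
  from hom_poly_weight_bound[OF hom circle_binomial_rot3_torus_third_axis this top]
  show ?thesis unfolding n_def by presburger
qed

section \<open>The case SO4\<close>

lemma tens_apply: "tens A B p q = A (fst p) (fst q) * B (snd p) (snd q)"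
  by (cases p, cases q) (simp add: tens_def)

lemma mmul_tens:
  "mmul (I \<times> J) (tens X1 X2) (tens Y1 Y2) = tens (mmul I X1 Y1) (mmul J X2 Y2)"
proof (intro ext)
  fix p q :: "'a \<times> 'b"
  have "mmul (I \<times> J) (tens X1 X2) (tens Y1 Y2) p q
      = (\<Sum>(k1, k2)\<in>I \<times> J. (X1 (fst p) k1 * Y1 k1 (fst q)) * (X2 (snd p) k2 * Y2 k2 (snd q)))"
    unfolding mmul_def by (rule sum.cong) (auto simp: tens_apply)
  also have "\<dots> = tens (mmul I X1 Y1) (mmul J X2 Y2) p q"
    by (simp add: tens_apply mmul_def sum_product sum.cartesian_product)
  finally show "mmul (I \<times> J) (tens X1 X2) (tens Y1 Y2) p q = tens (mmul I X1 Y1) (mmul J X2 Y2) p q" .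
qed

lemma mmul_sum_right:
  "mmul I X (\<lambda>p q. \<Sum>k\<in>F. G k p q) = (\<lambda>p q. \<Sum>k\<in>F. mmul I X (G k) p q)"
  unfolding mmul_def by (simp add: sum_distrib_left sum.swap[of _ I])

lemma mmul_sum_left:
  "mmul I (\<lambda>p q. \<Sum>k\<in>F. G k p q) X = (\<lambda>p q. \<Sum>k\<in>F. mmul I (G k) X p q)"
  unfolding mmul_def by (simp add: sum_distrib_right sum.swap[of _ I])

lemma conjS_one:
  assumes "Y \<in> endsp {..m}"
  shows "conjS m (1, 0) Y = Y"
proof -
  have one: "spin m (1, 0) j k = (if j = k \<and> k \<le> m then 1 else 0)" for j k
    by (simp add: spin_torus)
  have left: "mmul {..m} (spin m (1, 0)) Y i j = Y i j" for i j
  proof -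
    have "mmul {..m} (spin m (1, 0)) Y i j = (\<Sum>k\<le>m. if k = i then Y i j else 0)"
      unfolding mmul_def by (intro sum.cong) (auto simp: one)
    then show ?thesis using assms by (auto simp: endsp_def)
  qed
  have right: "mmul {..m} Y (spin m (1, 0)) i j = Y i j" for i j
  proof -
    have "mmul {..m} Y (spin m (1, 0)) i j = (\<Sum>k\<le>m. if k = j then Y i j else 0)"
      unfolding mmul_def by (intro sum.cong) (auto simp: one)
    then show ?thesis using assms by (auto simp: endsp_def)
  qed
  have "mmul {..m} (spin m (1, 0)) Y = Y" "mmul {..m} Y (spin m (1, 0)) = Y"
    using left right by (simp_all add: fun_eq_iff)
  then show ?thesis by (simp add: conjS_def qcnj_def)
qed

lemma conjT_left_tens_sum:
  assumes act: "\<And>x. conjS m1 u (lincomb n N x) = lincomb n N (mvmul {..n} (spin n u) x)"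
    and Y: "\<And>k. Y k \<in> endsp {..m2}"
  shows "conjT m1 m2 u (1, 0) (\<lambda>p q. \<Sum>k\<le>n. tens (N k) (Y k) p q)
       = (\<lambda>p q. \<Sum>j\<le>n. tens (N j) (\<lambda>r s. \<Sum>k\<le>n. spin n u j k * Y k r s) p q)"
proof -
  have column: "conjS m1 u (N k) = lincomb n N (\<lambda>j. spin n u j k)" if "k \<le> n" for k
  proof -
    have "conjS m1 u (N k) = conjS m1 u (lincomb n N (\<lambda>j. if j = k then 1 else 0))"
      by (simp only: lincomb_unit[OF that])
    also have "\<dots> = lincomb n N (mvmul {..n} (spin n u) (\<lambda>j. if j = k then 1 else 0))"
      by (rule act)
    also have "\<dots> = lincomb n N (\<lambda>j. spin n u j k)"
      using that by (intro lincomb_cong) (simp add: mvmul_def if_distrib[of "\<lambda>t. _ * t"] cong: if_cong)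
    finally show ?thesis .
  qed
  have "conjT m1 m2 u (1, 0) (\<lambda>p q. \<Sum>k\<le>n. tens (N k) (Y k) p q)
      = (\<lambda>p q. \<Sum>k\<le>n. tens (conjS m1 u (N k)) (conjS m2 (1, 0) (Y k)) p q)"
    unfolding conjT_def mmul_sum_right mmul_sum_left mmul_tens conjS_def qcnj_def by simp
  also have "\<dots> = (\<lambda>p q. \<Sum>k\<le>n. \<Sum>j\<le>n. spin n u j k * N j (fst p) (fst q) * Y k (snd p) (snd q))"
    by (intro ext sum.cong refl)
      (simp add: conjS_one[OF Y] column tens_apply lincomb_def sum_distrib_right mult.assoc)
  also have "\<dots> = (\<lambda>p q. \<Sum>j\<le>n. \<Sum>k\<le>n. N j (fst p) (fst q) * (spin n u j k * Y k (snd p) (snd q)))"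
    by (subst sum.swap) (simp add: ac_simps)
  also have "\<dots> = (\<lambda>p q. \<Sum>j\<le>n. tens (N j) (\<lambda>r s. \<Sum>k\<le>n. spin n u j k * Y k r s) p q)"
    by (simp add: tens_apply sum_distrib_left)
  finally show ?thesis .
qed

lemma tspan_decomposition:
  assumes span: "\<And>M. M \<in> W1 \<Longrightarrow> \<exists>x. M = lincomb n N x"
    and W2: "W2 \<subseteq> endsp {..m2}" and "M \<in> tspan W1 W2"
  obtains Y where "\<And>k. Y k \<in> endsp {..m2}" "M = (\<lambda>p q. \<Sum>k\<le>n. tens (N k) (Y k) p q)"
proof -
  obtain T :: nat and A B where AB: "\<And>t. t < T \<Longrightarrow> A t \<in> W1 \<and> B t \<in> W2"
    and M: "M = (\<lambda>p q. \<Sum>t<T. tens (A t) (B t) p q)"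
    using \<open>M \<in> tspan W1 W2\<close> unfolding tspan_def by blast
  have "\<forall>t\<in>{..<T}. \<exists>x. A t = lincomb n N x" using span AB by blast
  from bchoice[OF this] obtain x where x: "\<forall>t\<in>{..<T}. A t = lincomb n N (x t)" ..
  define Y where "Y k = (\<lambda>r s. \<Sum>t<T. x t k * B t r s)" for k
  have "Y k \<in> endsp {..m2}" for k
    using AB W2 by (auto simp: Y_def endsp_def subset_iff intro!: sum.neutral)
  moreover have "M = (\<lambda>p q. \<Sum>k\<le>n. tens (N k) (Y k) p q)"
  proof (intro ext)
    fix p q
    have "M p q = (\<Sum>t<T. \<Sum>k\<le>n. N k (fst p) (fst q) * (x t k * B t (snd p) (snd q)))"
      unfolding M using x
      by (auto simp: tens_apply lincomb_def sum_distrib_left sum_distrib_right ac_simps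
          intro!: sum.cong)
    also have "\<dots> = (\<Sum>k\<le>n. tens (N k) (Y k) p q)"
      by (subst sum.swap) (simp add: tens_apply Y_def sum_distrib_left)
    finally show "M p q = (\<Sum>k\<le>n. tens (N k) (Y k) p q)" .
  qed
  ultimately show ?thesis using that by blast
qed

lemma circle_binomial_rot4_torus:
  "circle_binomial 1 2 (\<lambda>a. complex_of_real (rot4 (a, 0) (1, 0) y $ k))"
proof -
  define c1 c2 where "c1 = Complex (y$1) (y$2)" and "c2 = Complex (y$3) (y$4)"
  have rot: "rot4 (a, 0) (1, 0) y $ 1 = Re (a * c1)" "rot4 (a, 0) (1, 0) y $ 2 = Im (a * c1)"
    "rot4 (a, 0) (1, 0) y $ 3 = Re (cnj a * c2)" "rot4 (a, 0) (1, 0) y $ 4 = Im (cnj a * c2)" for a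
    by (simp_all add: rot4_def qmul_def qcnj_def of_R4_def to_R4_def c1_def c2_def vector_def)
  have "circle_binomial 1 2 (\<lambda>a. a * c1)"
    unfolding circle_binomial_def
    by (rule exI[of _ 0], rule exI[of _ c1]) (simp add: power2_eq_square)
  moreover have "circle_binomial 1 2 (\<lambda>a. cnj (a * c1))"
    unfolding circle_binomial_def
    by (rule exI[of _ "cnj c1"], rule exI[of _ 0]) (simp add: unit_mult_cnj mult.assoc[symmetric])
  moreover have "circle_binomial 1 2 (\<lambda>a. cnj a * c2)"
    unfolding circle_binomial_def
    by (rule exI[of _ c2], rule exI[of _ 0]) (simp add: unit_mult_cnj mult.assoc[symmetric])
  moreover have "circle_binomial 1 2 (\<lambda>a. cnj (cnj a * c2))"
    unfolding circle_binomial_def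
    by (rule exI[of _ 0], rule exI[of _ "cnj c2"]) (simp add: power2_eq_square)
  ultimately
  have "circle_binomial 1 2 (\<lambda>a. complex_of_real (Re (a * c1)))"
    "circle_binomial 1 2 (\<lambda>a. complex_of_real (Im (a * c1)))"
    "circle_binomial 1 2 (\<lambda>a. complex_of_real (Re (cnj a * c2)))"
    "circle_binomial 1 2 (\<lambda>a. complex_of_real (Im (cnj a * c2)))"
    by (simp_all only: circle_binomial_Re circle_binomial_Im)
  then show ?thesis using exhaust_4[of k] by (elim disjE) (simp_all only: rot)
qed

lemma SO4_equivariant_degree:
  fixes P :: "real^4 \<Rightarrow> nat \<times> nat \<Rightarrow> nat \<times> nat \<Rightarrow> complex"
  assumes W1: "Wl_sub m1 l W1" and W2: "Wl_sub m2 l W2" and hom: "hom_poly d P"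
    and nz: "P y0 \<noteq> (\<lambda>i j. 0)" and inT: "\<And>y. P y \<in> tspan W1 W2"
    and equiv: "\<And>u v y. u \<in> SU2 \<Longrightarrow> v \<in> SU2 \<Longrightarrow> P (rot4 u v y) = conjT m1 m2 u v (P y)"
  shows "2 * l \<le> d \<and> even (d - 2 * l)"
proof -
  define n where "n = 2 * l"
  obtain N where span: "\<And>M. M \<in> W1 \<Longrightarrow> \<exists>x. M = lincomb n N x"
    and indep: "lincomb_independent n N"
    and act: "\<And>g x. g \<in> SU2 \<Longrightarrow> conjS m1 g (lincomb n N x) = lincomb n N (mvmul {..n} (spin n g) x)"
    using Wl_sub_weight_basis[OF W1] unfolding n_def by blast
  have rotate: "P (rot4 u (1, 0) y) =
      (\<lambda>p q. \<Sum>j\<le>n. tens (N j) (\<lambda>r s. \<Sum>k\<le>n. spin n u j k * Y k r s) p q)"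
    if "u \<in> SU2" "\<And>k. Y k \<in> endsp {..m2}" "P y = (\<lambda>p q. \<Sum>k\<le>n. tens (N k) (Y k) p q)" for u y Y
    unfolding equiv[OF \<open>u \<in> SU2\<close> SU2_one] \<open>P y = _\<close>
    by (rule conjT_left_tens_sum[OF act[OF \<open>u \<in> SU2\<close>] that(2)])
  have "W2 \<subseteq> endsp {..m2}" using W2 by (simp add: Wl_sub_def)
  then obtain Y where Y: "\<And>k. Y k \<in> endsp {..m2}"
    and P0: "P y0 = (\<lambda>p q. \<Sum>k\<le>n. tens (N k) (Y k) p q)"
    using tspan_decomposition[OF span _ inT[of y0]] by blast
  have "\<exists>k0 r s. k0 \<le> n \<and> Y k0 r s \<noteq> 0"
    using nz by (auto simp: P0 tens_apply fun_eq_iff intro: sum.neutral)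
  then obtain k0 r s where "k0 \<le> n" "Y k0 r s \<noteq> 0" by blast
  then obtain g where "g \<in> SU2" and top: "(\<Sum>k\<le>n. spin n g n k * Y k r s) \<noteq> 0"
    by (rule spin_last_row_nonvanishing)
  define Y' where "Y' j = (\<lambda>r s. \<Sum>k\<le>n. spin n g j k * Y k r s)" for j
  have Y': "Y' j \<in> endsp {..m2}" for j using Y by (simp add: Y'_def endsp_def)
  define y1 where "y1 = rot4 g (1, 0) y0"
  have P1: "P y1 = (\<lambda>p q. \<Sum>j\<le>n. tens (N j) (Y' j) p q)"
    unfolding y1_def Y'_def by (rule rotate[OF \<open>g \<in> SU2\<close> Y P0])
  obtain p q where "N n p q \<noteq> 0" using lincomb_independent_nonzero[OF indep order_refl] .
  with top have top': "N n p q * Y' n r s \<noteq> 0" by (simp add: Y'_def)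
  have "P (rot4 (a, 0) (1, 0) y1) (p, r) (q, s)
      = (\<Sum>j\<le>n. a ^ j * cnj a ^ (n - j) * (N j p q * Y' j r s))" if "cmod a = 1" for a
  proof -
    have "P (rot4 (a, 0) (1, 0) y1) (p, r) (q, s)
        = (\<Sum>j\<le>n. N j p q * (a ^ j * cnj a ^ (n - j) * Y' j r s))"
      unfolding rotate[OF SU2_torus[OF that] Y' P1] by (simp add: tens_apply spin_torus_sum)
    then show ?thesis by (simp add: ac_simps)
  qed
  from hom_poly_weight_bound[OF hom circle_binomial_rot4_torus this top']
  show ?thesis unfolding n_def by presburger
qed

theorem proposition4p3:
  shows
  "(\<forall>(mu::nat) (l::nat) (d::nat) (P :: real^3 \<Rightarrow> nat \<Rightarrow> nat \<Rightarrow> complex) W.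
      l \<le> 2 * mu \<and> Wl_sub (2 * mu) l W \<and>
      hom_poly d P \<and> (\<exists>y. P y \<noteq> (\<lambda>i j. 0)) \<and> (\<forall>y. P y \<in> W) \<and>
      (\<forall>u\<in>SU2. \<forall>y. P (rot3 u y) = conjS (2 * mu) u (P y))
      \<longrightarrow> l \<le> d \<and> even (d - l))
 \<and> (\<forall>(m1::nat) (m2::nat) (l::nat) (d::nat)
      (P :: real^4 \<Rightarrow> nat\<times>nat \<Rightarrow> nat\<times>nat \<Rightarrow> complex) W1 W2.
      even (m1 + m2) \<and> l \<le> min m1 m2 \<and> Wl_sub m1 l W1 \<and> Wl_sub m2 l W2 \<and>
      hom_poly d P \<and> (\<exists>y. P y \<noteq> (\<lambda>i j. 0)) \<and> (\<forall>y. P y \<in> tspan W1 W2) \<and>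
      (\<forall>u\<in>SU2. \<forall>v\<in>SU2. \<forall>y. P (rot4 u v y) = conjT m1 m2 u v (P y))
      \<longrightarrow> 2 * l \<le> d \<and> even (d - 2 * l))"
proof (rule conjI; intro allI impI)
  fix mu l d and P :: "real^3 \<Rightarrow> nat \<Rightarrow> nat \<Rightarrow> complex" and W
  assume "l \<le> 2 * mu \<and> Wl_sub (2 * mu) l W \<and>
      hom_poly d P \<and> (\<exists>y. P y \<noteq> (\<lambda>i j. 0)) \<and> (\<forall>y. P y \<in> W) \<and>
      (\<forall>u\<in>SU2. \<forall>y. P (rot3 u y) = conjS (2 * mu) u (P y))"
  then obtain y0 where "Wl_sub (2 * mu) l W" "hom_poly d P" "P y0 \<noteq> (\<lambda>i j. 0)"
    and "\<forall>y. P y \<in> W" "\<forall>u\<in>SU2. \<forall>y. P (rot3 u y) = conjS (2 * mu) u (P y)"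
    by blast
  then show "l \<le> d \<and> even (d - l)" by (intro SO3_equivariant_degree) blast+
next
  fix m1 m2 l d and P :: "real^4 \<Rightarrow> nat\<times>nat \<Rightarrow> nat\<times>nat \<Rightarrow> complex" and W1 W2
  assume "even (m1 + m2) \<and> l \<le> min m1 m2 \<and> Wl_sub m1 l W1 \<and> Wl_sub m2 l W2 \<and>
      hom_poly d P \<and> (\<exists>y. P y \<noteq> (\<lambda>i j. 0)) \<and> (\<forall>y. P y \<in> tspan W1 W2) \<and>
      (\<forall>u\<in>SU2. \<forall>v\<in>SU2. \<forall>y. P (rot4 u v y) = conjT m1 m2 u v (P y))"
  then obtain y0 where "Wl_sub m1 l W1" "Wl_sub m2 l W2" "hom_poly d P" "P y0 \<noteq> (\<lambda>i j. 0)"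
    and "\<forall>y. P y \<in> tspan W1 W2" "\<forall>u\<in>SU2. \<forall>v\<in>SU2. \<forall>y. P (rot4 u v y) = conjT m1 m2 u v (P y)"
    by blast
  then show "2 * l \<le> d \<and> even (d - 2 * l)" by (intro SO4_equivariant_degree) blast+
qed

end
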